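(* Let $f(\mathbf{x})=\mathbf{x}^{T}A\mathbf{x}+b^{T}\mathbf{x}+1$ with $A\in\mathbb{R}^{n\times n}$ symmetric and $b\in\mathbb{R}^n$, and let $Q/(1,1)=A-\frac14 bb^{T}$. Then: (i) $f$ has a monic Hermitian determinantal representation of size $2$, i.e. there exist Hermitian $A_1,\dots,A_n\in\mathbb{C}^{2\times 2}$ with $f(\mathbf{x})=\det(I_2+x_1A_1+\dots+x_nA_n)$ for all $\mathbf{x}$, if and only if $Q/(1,1)$ is negative semidefinite and $\operatorname{rank}(Q/(1,1))\le 3$; (ii) $f$ has a monic symmetric determinantal representation of size $2$ (i.e. as in (i) but with $A_j$ real symmetric) if and only if $Q/(1,1)$ is negative semidefinite and $\operatorname{rank}(Q/(1,1))\le 2$. In particular, if $Q/(1,1)$ is negative semidefinite of rank exactly $3$, then $f$ has a monic Hermitian determinantal representation of size $2$ but no monic symmetric determinantal representation of size $2$.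
   Context: $Q=\begin{bmatrix}1 & b^T/2\\ b/2 & A\end{bmatrix}$ is the matrix representation of $f$, i.e. $f(\mathbf{x})=Z^T Q Z$ with $Z=(1,x_1,\dots,x_n)^T$, and $Q/(1,1)$ denotes the Schur complement of its $(1,1)$ entry. *)

theory Defs
  imports "HOL-Analysis.Analysis"
begin

definition quad_poly :: "real^'n^'n \<Rightarrow> real^'n \<Rightarrow> real^'n \<Rightarrow> real" where
  "quad_poly A b x = x \<bullet> (A *v x) + b \<bullet> x + 1"

text \<open>Schur complement Q/(1,1) of the (1,1) entry of Q = [[1, b^T/2],[b/2, A]], i.e. A - (1/4) b b^T.\<close>
definition schur11 :: "real^'n^'n \<Rightarrow> real^'n \<Rightarrow> real^'n^'n" where
  "schur11 A b = (\<chi> i j. A $ i $ j - (1/4) * (b $ i) * (b $ j))"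

definition symmetric_mat :: "'a^'n^'n \<Rightarrow> bool" where
  "symmetric_mat M \<longleftrightarrow> transpose M = M"

definition hermitian_mat :: "complex^'n^'n \<Rightarrow> bool" where
  "hermitian_mat M \<longleftrightarrow> (\<forall>i j. M $ i $ j = cnj (M $ j $ i))"

definition neg_semidef :: "real^'n^'n \<Rightarrow> bool" where
  "neg_semidef M \<longleftrightarrow> symmetric_mat M \<and> (\<forall>x. x \<bullet> (M *v x) \<le> 0)"

definition has_monic_herm_rep2 :: "(real^'n \<Rightarrow> real) \<Rightarrow> bool" where
  "has_monic_herm_rep2 f \<longleftrightarrow>
     (\<exists>As :: 'n \<Rightarrow> complex^2^2. (\<forall>j. hermitian_mat (As j)) \<and>
        (\<forall>x. complex_of_real (f x) = det (mat 1 + (\<Sum>j\<in>UNIV. (x $ j) *\<^sub>R As j))))"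

definition has_monic_sym_rep2 :: "(real^'n \<Rightarrow> real) \<Rightarrow> bool" where
  "has_monic_sym_rep2 f \<longleftrightarrow>
     (\<exists>As :: 'n \<Rightarrow> real^2^2. (\<forall>j. symmetric_mat (As j)) \<and>
        (\<forall>x. f x = det (mat 1 + (\<Sum>j\<in>UNIV. (x $ j) *\<^sub>R As j))))"

end

theory Submission
  imports Defs
begin

text \<open>
  Writing \<open>S = Q/(1,1)\<close>, completing the square gives \<open>f x = (1 + b\<bullet>x/2)\<^sup>2 + x\<bullet>S x\<close>.
  A \<open>2\<times>2\<close> Hermitian pencil with diagonal \<open>c \<plusminus> u\<close> and off-diagonal entry \<open>r + i s\<close> has
  determinant \<open>(1 + c\<bullet>x)\<^sup>2 - (u\<bullet>x)\<^sup>2 - (r\<bullet>x)\<^sup>2 - (s\<bullet>x)\<^sup>2\<close>; in the real symmetric case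
  \<open>s = 0\<close>. Comparing \<open>f x\<close> with \<open>f (-x)\<close> separates the linear from the quadratic
  part, so \<open>f\<close> has such a representation iff \<open>x\<bullet>S x\<close> is minus a sum of three
  (resp. two) squares of linear forms, i.e. iff \<open>S\<close> is negative semidefinite of rank
  at most three (resp. two).
\<close>

definition outer_prod :: "real^'n \<Rightarrow> real^'n^'n" where
  "outer_prod w = (\<chi> i j. w$i * w$j)"

lemma outer_prod_mult_vec: "outer_prod w *v x = (w \<bullet> x) *\<^sub>R w"
  by (simp add: outer_prod_def vec_eq_iff matrix_vector_mult_def inner_vec_def
      sum_distrib_left mult_ac)

lemma sum_mult_vec: "(\<Sum>i\<in>I. M i) *v (x::real^'n) = (\<Sum>i\<in>I. M i *v x)"
  by (induction I rule: infinite_finite_induct) (auto simp: matrix_vector_mult_add_rdistrib)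

lemma quadratic_form_outer_prod: "x \<bullet> (outer_prod w *v x) = (w \<bullet> x)\<^sup>2"
  by (simp add: outer_prod_mult_vec power2_eq_square inner_commute)

lemma quadratic_form_sum_outer_prod:
  "x \<bullet> ((\<Sum>i\<in>I. outer_prod (w i)) *v x) = (\<Sum>i\<in>I. (w i \<bullet> x)\<^sup>2)"
  by (simp add: sum_mult_vec quadratic_form_outer_prod inner_sum_right)

lemma uminus_mult_vec: "(- M) *v x = - (M *v (x::real^'n))"
  by (simp add: vec_eq_iff matrix_vector_mult_def sum_negf)

lemma rank_uminus: "rank (- M) = rank (M::real^'n^'m)"
proof -
  have "(- M) *v x = M *v (- x)" for x
    by (simp add: uminus_mult_vec vec.neg)
  then have "range ((*v) (- M)) = range ((*v) M)"
    by (auto simp: image_iff) (metis minus_minus)+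
  then show ?thesis by (simp add: rank_dim_range)
qed

lemma symmetric_mat_iff: "symmetric_mat M \<longleftrightarrow> (\<forall>i j. M$i$j = M$j$i)"
  by (auto simp: symmetric_mat_def transpose_def vec_eq_iff)

lemma symmetric_mat_sum_outer_prod: "symmetric_mat (\<Sum>i\<in>I. outer_prod (w i))"
  by (simp add: symmetric_mat_iff outer_prod_def mult.commute)

lemma symmetric_mat_inner_commute:
  fixes M :: "real^'n^'n"
  assumes "symmetric_mat M"
  shows "x \<bullet> (M *v y) = y \<bullet> (M *v x)"
  by (metis assms dot_lmul_matrix inner_commute symmetric_mat_def transpose_matrix_vector)

lemma symmetric_mat_eq_0_if_quadratic_form_0:
  fixes M :: "real^'n^'n"
  assumes sym: "symmetric_mat M" and zero: "\<And>x. x \<bullet> (M *v x) = 0"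
  shows "M = 0"
proof -
  have "x \<bullet> (M *v y) = 0" for x y
  proof -
    have "(x + y) \<bullet> (M *v (x + y)) = 0" by (rule zero)
    then show ?thesis
      using zero[of x] zero[of y] symmetric_mat_inner_commute[OF sym, of x y]
      by (simp add: matrix_vector_right_distrib inner_add_left inner_add_right)
  qed
  then have "M *v y = 0" for y by (metis inner_eq_zero_iff)
  then show ?thesis using matrix_eq[of M 0] by simp
qed

definition pos_semidef :: "real^'n^'n \<Rightarrow> bool" where
  "pos_semidef M \<longleftrightarrow> symmetric_mat M \<and> (\<forall>x. 0 \<le> x \<bullet> (M *v x))"

lemma neg_semidef_iff_pos_semidef_uminus: "neg_semidef S \<longleftrightarrow> pos_semidef (- S)"
  by (simp add: neg_semidef_def pos_semidef_def symmetric_mat_iff uminus_mult_vec)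

lemma pos_semidef_cauchy_schwarz:
  fixes P :: "real^'n^'n"
  assumes "pos_semidef P" and c: "0 < e \<bullet> (P *v e)"
  shows "(x \<bullet> (P *v e))\<^sup>2 / (e \<bullet> (P *v e)) \<le> x \<bullet> (P *v x)"
proof -
  define B where "B = x \<bullet> (P *v e)"
  define t where "t = - B / (e \<bullet> (P *v e))"
  have sym: "symmetric_mat P" and psd: "\<And>y. 0 \<le> y \<bullet> (P *v y)"
    using assms(1) by (auto simp: pos_semidef_def)
  have "e \<bullet> (P *v x) = B"
    using symmetric_mat_inner_commute[OF sym, of e x] by (simp add: B_def)
  then have "(x + t *\<^sub>R e) \<bullet> (P *v (x + t *\<^sub>R e))
      = x \<bullet> (P *v x) + 2 * t * B + t\<^sup>2 * (e \<bullet> (P *v e))"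
    by (simp add: matrix_vector_right_distrib inner_add_left inner_add_right vec.scale
        B_def power2_eq_square algebra_simps)
  also have "\<dots> = x \<bullet> (P *v x) - B\<^sup>2 / (e \<bullet> (P *v e))"
    using c by (simp add: t_def field_simps power2_eq_square)
  finally show ?thesis using psd[of "x + t *\<^sub>R e"] by (simp add: B_def)
qed

lemma rank_less_if_range_in_hyperplane:
  fixes M M' :: "real^'n^'m"
  assumes range: "\<And>x. \<exists>y. M' *v x = M *v y"
    and orth: "\<And>x. e \<bullet> (M' *v x) = 0" and not_orth: "e \<bullet> (M *v v) \<noteq> 0"
  shows "rank M' < rank M"
proof -
  have sub: "range ((*v) M') \<subseteq> span (range ((*v) M))"
    by (clarify, metis range rangeI span_base)
  have "span (range ((*v) M')) \<subseteq> {y. e \<bullet> y = 0}"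
    using orth by (intro span_minimal[OF _ subspace_hyperplane]) auto
  moreover have "M *v v \<in> span (range ((*v) M))" by (simp add: span_base)
  ultimately have "span (range ((*v) M')) \<subset> span (range ((*v) M))"
    using not_orth span_minimal[OF sub subspace_span] by blast
  then show ?thesis by (simp add: rank_dim_range dim_psubset)
qed

text \<open>
  Peeling off \<open>w = P e / \<surd>(e\<bullet>P e)\<close> keeps \<open>P\<close> semidefinite by Cauchy-Schwarz and kills
  \<open>e\<close>, so it lowers the rank.
\<close>

lemma pos_semidef_peel_outer_prod:
  fixes P :: "real^'n^'n"
  assumes psd: "pos_semidef P" and "P \<noteq> 0"
  obtains w where "pos_semidef (P - outer_prod w)" "rank (P - outer_prod w) < rank P"
proof -
  have sym: "symmetric_mat P" using psd by (simp add: pos_semidef_def)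
  obtain e where "e \<bullet> (P *v e) \<noteq> 0"
    using symmetric_mat_eq_0_if_quadratic_form_0[OF sym] \<open>P \<noteq> 0\<close> by blast
  then have c: "0 < e \<bullet> (P *v e)"
    using psd by (auto simp: pos_semidef_def order_le_less)
  define w where "w = (1 / sqrt (e \<bullet> (P *v e))) *\<^sub>R (P *v e)"
  define P' where "P' = P - outer_prod w"
  have P'_mult: "P' *v x = P *v x - (w \<bullet> x) *\<^sub>R w" for x
    by (simp add: P'_def outer_prod_mult_vec matrix_vector_mult_diff_rdistrib)
  have w_sq: "(w \<bullet> x)\<^sup>2 = (x \<bullet> (P *v e))\<^sup>2 / (e \<bullet> (P *v e))" for x
    using c by (simp add: w_def power_divide power_mult_distrib inner_commute)
  have sym': "symmetric_mat P'"
    using sym symmetric_mat_sum_outer_prod[of id "{w}"]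
    by (simp add: P'_def symmetric_mat_iff)
  have "0 \<le> x \<bullet> (P' *v x)" for x
  proof -
    have "x \<bullet> (P' *v x) = x \<bullet> (P *v x) - (w \<bullet> x)\<^sup>2"
      by (simp add: P'_mult inner_diff_right power2_eq_square inner_commute)
    then show ?thesis
      using pos_semidef_cauchy_schwarz[OF psd c, of x] w_sq[of x] by simp
  qed
  then have "pos_semidef P'" using sym' by (simp add: pos_semidef_def)
  moreover have "rank P' < rank P"
  proof (rule rank_less_if_range_in_hyperplane)
    show "\<exists>y. P' *v x = P *v y" for x
      by (rule exI[of _ "x - ((w \<bullet> x) / sqrt (e \<bullet> (P *v e))) *\<^sub>R e"])
        (simp add: P'_mult matrix_vector_mult_diff_distrib matrix_vector_mult_scaleR w_def)
    have "P' *v e = 0"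
      using c by (simp add: P'_mult w_def inner_commute)
    then show "e \<bullet> (P' *v x) = 0" for x
      using symmetric_mat_inner_commute[OF sym', of e x] by simp
    show "e \<bullet> (P *v e) \<noteq> 0" using c by simp
  qed
  ultimately show ?thesis using that P'_def by blast
qed

lemma pos_semidef_eq_sum_outer_prod:
  fixes P :: "real^'n^'n"
  assumes "pos_semidef P" "rank P \<le> k"
  shows "\<exists>w. P = (\<Sum>i<k. outer_prod (w i))"
  using assms
proof (induction k arbitrary: P)
  case 0
  then show ?case by (simp add: rank_eq_0)
next
  case (Suc k)
  show ?case
  proof (cases "P = 0")
    case True
    have "outer_prod 0 = (0::real^'n^'n)" by (simp add: outer_prod_def vec_eq_iff)
    with True show ?thesis by (intro exI[of _ "\<lambda>_. 0"]) simp
  next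
    case False
    then obtain w where w: "pos_semidef (P - outer_prod w)" "rank (P - outer_prod w) < rank P"
      using pos_semidef_peel_outer_prod[OF Suc.prems(1)] by blast
    then obtain w' where "P - outer_prod w = (\<Sum>i<k. outer_prod (w' i))"
      using Suc.IH[OF w(1)] Suc.prems(2) by fastforce
    then have "P = (\<Sum>i<Suc k. outer_prod ((w'(k := w)) i))"
      by (simp add: algebra_simps)
    then show ?thesis by blast
  qed
qed

lemma rank_sum_outer_prod_le: "rank (\<Sum>i<k. outer_prod (w i)) \<le> k"
proof -
  have "range ((*v) (\<Sum>i<k. outer_prod (w i))) \<subseteq> span (w ` {..<k})"
    by (clarsimp simp: sum_mult_vec outer_prod_mult_vec) (intro span_sum span_scale span_base; simp)
  then have "rank (\<Sum>i<k. outer_prod (w i)) \<le> card (w ` {..<k})"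
    unfolding rank_dim_range by (rule dim_le_card) auto
  also have "\<dots> \<le> k" using card_image_le[of "{..<k}" w] by simp
  finally show ?thesis .
qed

lemma neg_semidef_rank_le_iff_sum_squares:
  fixes S :: "real^'n^'n"
  assumes sym: "symmetric_mat S"
  shows "neg_semidef S \<and> rank S \<le> k \<longleftrightarrow> (\<exists>w. \<forall>x. x \<bullet> (S *v x) = - (\<Sum>i<k. (w i \<bullet> x)\<^sup>2))"
proof
  assume "neg_semidef S \<and> rank S \<le> k"
  then obtain w where decomp: "- S = (\<Sum>i<k. outer_prod (w i))"
    using pos_semidef_eq_sum_outer_prod
    by (metis neg_semidef_iff_pos_semidef_uminus rank_uminus)
  have "x \<bullet> ((- S) *v x) = (\<Sum>i<k. (w i \<bullet> x)\<^sup>2)" for x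
    unfolding decomp by (rule quadratic_form_sum_outer_prod)
  then have "x \<bullet> (S *v x) = - (\<Sum>i<k. (w i \<bullet> x)\<^sup>2)" for x
    by (metis inner_minus_right minus_minus uminus_mult_vec)
  then show "\<exists>w. \<forall>x. x \<bullet> (S *v x) = - (\<Sum>i<k. (w i \<bullet> x)\<^sup>2)" by blast
next
  assume "\<exists>w. \<forall>x. x \<bullet> (S *v x) = - (\<Sum>i<k. (w i \<bullet> x)\<^sup>2)"
  then obtain w where w: "\<And>x. x \<bullet> (S *v x) = - (\<Sum>i<k. (w i \<bullet> x)\<^sup>2)" by blast
  have "S + (\<Sum>i<k. outer_prod (w i)) = 0"
    using sym symmetric_mat_sum_outer_prod[of w "{..<k}"] w
    by (intro symmetric_mat_eq_0_if_quadratic_form_0)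
      (simp_all add: symmetric_mat_iff matrix_vector_mult_add_rdistrib inner_add_right
        quadratic_form_sum_outer_prod)
  then have "- S = (\<Sum>i<k. outer_prod (w i))"
    by (simp add: add_eq_0_iff)
  then show "neg_semidef S \<and> rank S \<le> k"
    using sym rank_sum_outer_prod_le[of w k]
    by (metis neg_semidef_iff_pos_semidef_uminus pos_semidef_def quadratic_form_sum_outer_prod
        rank_uminus sum_nonneg symmetric_mat_sum_outer_prod zero_le_power2)
qed

lemma quad_poly_complete_square:
  "quad_poly A b x = (1 + (b \<bullet> x) / 2)\<^sup>2 + x \<bullet> (schur11 A b *v x)"
proof -
  have "schur11 A b = A - (1/4) *\<^sub>R outer_prod b"
    by (simp add: schur11_def outer_prod_def vec_eq_iff)
  then have "x \<bullet> (schur11 A b *v x) = x \<bullet> (A *v x) - (b \<bullet> x)\<^sup>2 / 4"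
    by (simp add: matrix_vector_mult_diff_rdistrib inner_diff_right quadratic_form_outer_prod
        flip: scaleR_matrix_vector_assoc)
  then show ?thesis
    by (simp add: quad_poly_def power2_eq_square field_simps)
qed

lemma symmetric_mat_schur11: "symmetric_mat A \<Longrightarrow> symmetric_mat (schur11 A b)"
  by (simp add: symmetric_mat_iff schur11_def mult.commute)

text \<open>Evenness of \<open>q\<close> lets \<open>f x - f (-x)\<close> pin down the linear part as \<open>b \<bullet> x\<close>.\<close>

lemma quad_poly_eq_square_minus_iff:
  assumes even: "\<And>x. q (- x) = q x"
  shows "(\<exists>c. \<forall>x. quad_poly A b x = (1 + c \<bullet> x)\<^sup>2 - q x)
    \<longleftrightarrow> (\<forall>x. x \<bullet> (schur11 A b *v x) = - q x)"
proof
  assume "\<exists>c. \<forall>x. quad_poly A b x = (1 + c \<bullet> x)\<^sup>2 - q x"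
  then obtain c where c: "\<And>x. quad_poly A b x = (1 + c \<bullet> x)\<^sup>2 - q x" by blast
  show "\<forall>x. x \<bullet> (schur11 A b *v x) = - q x"
  proof
    fix x
    have "quad_poly A b x - quad_poly A b (- x) = 2 * (b \<bullet> x)"
      by (simp add: quad_poly_def vec.neg)
    moreover have "quad_poly A b x - quad_poly A b (- x) = 4 * (c \<bullet> x)"
      using c[of x] c[of "- x"] even[of x] by (simp add: power2_eq_square algebra_simps)
    ultimately have c_x: "c \<bullet> x = (b \<bullet> x) / 2" by simp
    show "x \<bullet> (schur11 A b *v x) = - q x"
      using c[of x] quad_poly_complete_square[of A b x] by (simp only: c_x)
  qed
next
  assume "\<forall>x. x \<bullet> (schur11 A b *v x) = - q x"
  then have "quad_poly A b x = (1 + ((1/2) *\<^sub>R b) \<bullet> x)\<^sup>2 - q x" for x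
    using quad_poly_complete_square[of A b x] by simp
  then show "\<exists>c. \<forall>x. quad_poly A b x = (1 + c \<bullet> x)\<^sup>2 - q x" by blast
qed

lemma quad_poly_eq_square_minus_sum_squares_iff:
  assumes "symmetric_mat A"
  shows "(\<exists>c w. \<forall>x. quad_poly A b x = (1 + c \<bullet> x)\<^sup>2 - (\<Sum>i<k. (w i \<bullet> x)\<^sup>2))
    \<longleftrightarrow> neg_semidef (schur11 A b) \<and> rank (schur11 A b) \<le> k"
  using quad_poly_eq_square_minus_iff[where q = "\<lambda>x. \<Sum>i<k. (w i \<bullet> x)\<^sup>2" for w]
    neg_semidef_rank_le_iff_sum_squares[OF symmetric_mat_schur11[OF assms]]
  by (simp add: inner_minus_right) blast

lemma sum_lessThan_3: "(\<Sum>i<(3::nat). g i) = g 0 + g 1 + g 2"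
  by (simp add: numeral_3_eq_3 numeral_2_eq_2 add.assoc)

lemma det_hermitian_pencil2:
  fixes As :: "'n::finite \<Rightarrow> complex^2^2"
  assumes "\<And>j. As j$1$1 = of_real (c$j + u$j)" "\<And>j. As j$2$2 = of_real (c$j - u$j)"
    and "\<And>j. As j$1$2 = Complex (r$j) (s$j)" "\<And>j. As j$2$1 = Complex (r$j) (- s$j)"
  shows "det (mat 1 + (\<Sum>j\<in>UNIV. (x $ j) *\<^sub>R As j)) =
    of_real ((1 + c \<bullet> x)\<^sup>2 - (u \<bullet> x)\<^sup>2 - (r \<bullet> x)\<^sup>2 - (s \<bullet> x)\<^sup>2)"
proof -
  let ?M = "mat 1 + (\<Sum>j\<in>UNIV. (x $ j) *\<^sub>R As j)"
  have entries: "?M$1$1 = of_real (1 + c \<bullet> x + u \<bullet> x)" "?M$2$2 = of_real (1 + c \<bullet> x - u \<bullet> x)"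
    "?M$1$2 = Complex (r \<bullet> x) (s \<bullet> x)" "?M$2$1 = Complex (r \<bullet> x) (- (s \<bullet> x))"
    by (simp_all add: mat_def assms complex_eq_iff Re_sum Im_sum inner_vec_def
        sum.distrib sum_subtractf sum_negf algebra_simps)
  show ?thesis
    unfolding det_2 entries by (simp add: complex_eq_iff power2_eq_square algebra_simps)
qed

lemma det_symmetric_pencil2:
  fixes As :: "'n::finite \<Rightarrow> real^2^2"
  assumes "\<And>j. As j$1$1 = c$j + u$j" "\<And>j. As j$2$2 = c$j - u$j"
    and "\<And>j. As j$1$2 = r$j" "\<And>j. As j$2$1 = r$j"
  shows "det (mat 1 + (\<Sum>j\<in>UNIV. (x $ j) *\<^sub>R As j)) = (1 + c \<bullet> x)\<^sup>2 - (u \<bullet> x)\<^sup>2 - (r \<bullet> x)\<^sup>2"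
proof -
  let ?M = "mat 1 + (\<Sum>j\<in>UNIV. (x $ j) *\<^sub>R As j)"
  have entries: "?M$1$1 = 1 + c \<bullet> x + u \<bullet> x" "?M$2$2 = 1 + c \<bullet> x - u \<bullet> x"
    "?M$1$2 = r \<bullet> x" "?M$2$1 = r \<bullet> x"
    by (simp_all add: mat_def assms inner_vec_def sum.distrib sum_subtractf algebra_simps)
  show ?thesis
    unfolding det_2 entries by (simp add: power2_eq_square algebra_simps)
qed

lemma hermitian_pencil2_det_eq_square_minus_sum_squares:
  fixes As :: "'n::finite \<Rightarrow> complex^2^2"
  assumes herm: "\<And>j. hermitian_mat (As j)"
  obtains c w where "\<And>x. det (mat 1 + (\<Sum>j\<in>UNIV. (x $ j) *\<^sub>R As j)) =
    of_real ((1 + c \<bullet> x)\<^sup>2 - (\<Sum>i<(3::nat). (w i \<bullet> x)\<^sup>2))"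
proof -
  have herm_entries: "As j$p$q = cnj (As j$q$p)" for j p q
    using herm[of j] unfolding hermitian_mat_def by blast
  have diag_real: "Im (As j$p$p) = 0" for j p
    using arg_cong[OF herm_entries[of j p p], of Im] by simp
  have lower: "As j$2$1 = cnj (As j$1$2)" for j
    by (rule herm_entries)
  define c where "c = (\<chi> j. Re (As j$1$1 + As j$2$2) / 2)"
  define u where "u = (\<chi> j. Re (As j$1$1 - As j$2$2) / 2)"
  define r where "r = (\<chi> j. Re (As j$1$2))"
  define s where "s = (\<chi> j. Im (As j$1$2))"
  have "det (mat 1 + (\<Sum>j\<in>UNIV. (x $ j) *\<^sub>R As j)) =
      of_real ((1 + c \<bullet> x)\<^sup>2 - (u \<bullet> x)\<^sup>2 - (r \<bullet> x)\<^sup>2 - (s \<bullet> x)\<^sup>2)" for x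
    by (intro det_hermitian_pencil2)
      (simp_all add: c_def u_def r_def s_def complex_eq_iff diag_real lower field_simps)
  moreover have "(\<Sum>i<(3::nat). ([u, r, s] ! i \<bullet> x)\<^sup>2) = (u \<bullet> x)\<^sup>2 + (r \<bullet> x)\<^sup>2 + (s \<bullet> x)\<^sup>2"
    for x by (simp add: sum_lessThan_3)
  ultimately have "det (mat 1 + (\<Sum>j\<in>UNIV. (x $ j) *\<^sub>R As j)) =
      of_real ((1 + c \<bullet> x)\<^sup>2 - (\<Sum>i<(3::nat). ([u, r, s] ! i \<bullet> x)\<^sup>2))" for x
    by (simp add: diff_diff_eq)
  then show ?thesis using that by blast
qed

lemma symmetric_pencil2_det_eq_square_minus_sum_squares:
  fixes As :: "'n::finite \<Rightarrow> real^2^2"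
  assumes sym: "\<And>j. symmetric_mat (As j)"
  obtains c w where "\<And>x. det (mat 1 + (\<Sum>j\<in>UNIV. (x $ j) *\<^sub>R As j)) =
    (1 + c \<bullet> x)\<^sup>2 - (\<Sum>i<(2::nat). (w i \<bullet> x)\<^sup>2)"
proof -
  have lower: "As j$2$1 = As j$1$2" for j
    using sym[of j] unfolding symmetric_mat_iff by blast
  define c where "c = (\<chi> j. (As j$1$1 + As j$2$2) / 2)"
  define u where "u = (\<chi> j. (As j$1$1 - As j$2$2) / 2)"
  define r where "r = (\<chi> j. As j$1$2)"
  have "det (mat 1 + (\<Sum>j\<in>UNIV. (x $ j) *\<^sub>R As j)) =
      (1 + c \<bullet> x)\<^sup>2 - (u \<bullet> x)\<^sup>2 - (r \<bullet> x)\<^sup>2" for x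
    by (intro det_symmetric_pencil2) (simp_all add: c_def u_def r_def lower field_simps)
  then have "det (mat 1 + (\<Sum>j\<in>UNIV. (x $ j) *\<^sub>R As j)) =
      (1 + c \<bullet> x)\<^sup>2 - (\<Sum>i<(2::nat). ([u, r] ! i \<bullet> x)\<^sup>2)" for x
    by (simp add: numeral_2_eq_2)
  then show ?thesis using that by blast
qed

lemma has_monic_herm_rep2_iff:
  fixes f :: "real^'n \<Rightarrow> real"
  shows "has_monic_herm_rep2 f \<longleftrightarrow> (\<exists>c w. \<forall>x. f x = (1 + c \<bullet> x)\<^sup>2 - (\<Sum>i<(3::nat). (w i \<bullet> x)\<^sup>2))"
proof
  assume "has_monic_herm_rep2 f"
  then obtain As :: "'n \<Rightarrow> complex^2^2" where herm: "\<And>j. hermitian_mat (As j)"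
    and rep: "\<And>x. complex_of_real (f x) = det (mat 1 + (\<Sum>j\<in>UNIV. (x $ j) *\<^sub>R As j))"
    unfolding has_monic_herm_rep2_def by blast
  obtain c w where det: "\<And>x. det (mat 1 + (\<Sum>j\<in>UNIV. (x $ j) *\<^sub>R As j)) =
      of_real ((1 + c \<bullet> x)\<^sup>2 - (\<Sum>i<(3::nat). (w i \<bullet> x)\<^sup>2))"
    using hermitian_pencil2_det_eq_square_minus_sum_squares[of As] herm by blast
  have "f x = (1 + c \<bullet> x)\<^sup>2 - (\<Sum>i<(3::nat). (w i \<bullet> x)\<^sup>2)" for x
    using rep[of x] unfolding det of_real_eq_iff .
  then show "\<exists>c w. \<forall>x. f x = (1 + c \<bullet> x)\<^sup>2 - (\<Sum>i<(3::nat). (w i \<bullet> x)\<^sup>2)" by blast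
next
  assume "\<exists>c w. \<forall>x. f x = (1 + c \<bullet> x)\<^sup>2 - (\<Sum>i<(3::nat). (w i \<bullet> x)\<^sup>2)"
  then obtain c w where f: "\<And>x. f x = (1 + c \<bullet> x)\<^sup>2 - (\<Sum>i<(3::nat). (w i \<bullet> x)\<^sup>2)" by blast
  define As :: "'n \<Rightarrow> complex^2^2" where "As j = (\<chi> p q.
     if p = 1 then (if q = 1 then of_real (c$j + w 0$j) else Complex (w 1$j) (w 2$j))
     else (if q = 1 then Complex (w 1$j) (- w 2$j) else of_real (c$j - w 0$j)))" for j
  have "hermitian_mat (As j)" for j
    unfolding hermitian_mat_def forall_2 by (simp add: As_def complex_eq_iff)
  moreover have "complex_of_real (f x) = det (mat 1 + (\<Sum>j\<in>UNIV. (x $ j) *\<^sub>R As j))" for x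
  proof -
    have "f x = (1 + c \<bullet> x)\<^sup>2 - (w 0 \<bullet> x)\<^sup>2 - (w 1 \<bullet> x)\<^sup>2 - (w 2 \<bullet> x)\<^sup>2"
      using f[of x] unfolding sum_lessThan_3 by (simp add: algebra_simps)
    moreover have "det (mat 1 + (\<Sum>j\<in>UNIV. (x $ j) *\<^sub>R As j)) =
        of_real ((1 + c \<bullet> x)\<^sup>2 - (w 0 \<bullet> x)\<^sup>2 - (w 1 \<bullet> x)\<^sup>2 - (w 2 \<bullet> x)\<^sup>2)"
      by (rule det_hermitian_pencil2) (simp_all add: As_def)
    ultimately show ?thesis by (simp only:)
  qed
  ultimately show "has_monic_herm_rep2 f"
    unfolding has_monic_herm_rep2_def by blast
qed

lemma has_monic_sym_rep2_iff:
  fixes f :: "real^'n \<Rightarrow> real"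
  shows "has_monic_sym_rep2 f \<longleftrightarrow> (\<exists>c w. \<forall>x. f x = (1 + c \<bullet> x)\<^sup>2 - (\<Sum>i<(2::nat). (w i \<bullet> x)\<^sup>2))"
proof
  assume "has_monic_sym_rep2 f"
  then obtain As :: "'n \<Rightarrow> real^2^2" where sym: "\<And>j. symmetric_mat (As j)"
    and rep: "\<And>x. f x = det (mat 1 + (\<Sum>j\<in>UNIV. (x $ j) *\<^sub>R As j))"
    unfolding has_monic_sym_rep2_def by blast
  obtain c w where det: "\<And>x. det (mat 1 + (\<Sum>j\<in>UNIV. (x $ j) *\<^sub>R As j)) =
      (1 + c \<bullet> x)\<^sup>2 - (\<Sum>i<(2::nat). (w i \<bullet> x)\<^sup>2)"
    using symmetric_pencil2_det_eq_square_minus_sum_squares[of As] sym by blast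
  have "f x = (1 + c \<bullet> x)\<^sup>2 - (\<Sum>i<(2::nat). (w i \<bullet> x)\<^sup>2)" for x
    using rep[of x] unfolding det .
  then show "\<exists>c w. \<forall>x. f x = (1 + c \<bullet> x)\<^sup>2 - (\<Sum>i<(2::nat). (w i \<bullet> x)\<^sup>2)" by blast
next
  assume "\<exists>c w. \<forall>x. f x = (1 + c \<bullet> x)\<^sup>2 - (\<Sum>i<(2::nat). (w i \<bullet> x)\<^sup>2)"
  then obtain c w where f: "\<And>x. f x = (1 + c \<bullet> x)\<^sup>2 - (\<Sum>i<(2::nat). (w i \<bullet> x)\<^sup>2)" by blast
  define As :: "'n \<Rightarrow> real^2^2" where "As j = (\<chi> p q.
     if p = 1 then (if q = 1 then c$j + w 0$j else w 1$j)
     else (if q = 1 then w 1$j else c$j - w 0$j))" for j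
  have "symmetric_mat (As j)" for j
    unfolding symmetric_mat_iff forall_2 by (simp add: As_def)
  moreover have "f x = det (mat 1 + (\<Sum>j\<in>UNIV. (x $ j) *\<^sub>R As j))" for x
    using f[of x]
    by (subst det_symmetric_pencil2[where c = c and u = "w 0" and r = "w 1"])
      (simp_all add: As_def numeral_2_eq_2 algebra_simps)
  ultimately show "has_monic_sym_rep2 f"
    unfolding has_monic_sym_rep2_def by blast
qed

theorem mainTheorem2:
  fixes A :: "real^'n^'n" and b :: "real^'n"
  assumes "symmetric_mat A"
  shows "(has_monic_herm_rep2 (quad_poly A b) \<longleftrightarrow>
            neg_semidef (schur11 A b) \<and> rank (schur11 A b) \<le> 3)
       \<and> (has_monic_sym_rep2 (quad_poly A b) \<longleftrightarrow>
            neg_semidef (schur11 A b) \<and> rank (schur11 A b) \<le> 2)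
       \<and> (neg_semidef (schur11 A b) \<and> rank (schur11 A b) = 3 \<longrightarrow>
            has_monic_herm_rep2 (quad_poly A b) \<and> \<not> has_monic_sym_rep2 (quad_poly A b))"
proof -
  have herm: "has_monic_herm_rep2 (quad_poly A b) \<longleftrightarrow>
      neg_semidef (schur11 A b) \<and> rank (schur11 A b) \<le> 3"
    using has_monic_herm_rep2_iff quad_poly_eq_square_minus_sum_squares_iff[OF assms] by blast
  have sym: "has_monic_sym_rep2 (quad_poly A b) \<longleftrightarrow>
      neg_semidef (schur11 A b) \<and> rank (schur11 A b) \<le> 2"
    using has_monic_sym_rep2_iff quad_poly_eq_square_minus_sum_squares_iff[OF assms] by blast
  show ?thesis using herm sym by auto
qed

end
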